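(* Let $q$ be a prime power, let $C\subseteq\mathbb{F}_q^n$ be an $[n,k]_q$ linear code, and let $t\in\mathbb{N}$. Then \[ \log_{q^t} \left(V_{q^t,n,R_t(C)}\right) \geq n-k. \]
   Context: An $[n,k]_q$ code is a $k$-dimensional subspace of $\mathbb{F}_q^n$. For a $t\times n$ matrix $\mathbf{v}$ over $\mathbb{F}_q$ with rows $\overline{v}_1,\dots,\overline{v}_t$, $\mathrm{wt}^{(t)}(\mathbf{v})=\left|\bigcup_{i} \mathrm{supp}(\overline{v}_i)\right|$ and $d^{(t)}(\mathbf{u},\mathbf{v})=\mathrm{wt}^{(t)}(\mathbf{u}-\mathbf{v})$. $C^t$ is the set of $t\times n$ matrices over $\mathbb{F}_q$ all of whose rows lie in $C$, and the $t$-th generalized covering radius $R_t(C)$ is the smallest integer $\rho$ such that for every $\mathbf{v}\in\mathbb{F}_q^{t\times n}$ some $\mathbf{c}\in C^t$ has $d^{(t)}(\mathbf{v},\mathbf{c})\le\rho$. $V_{Q,n,r}=\sum_{i=0}^r\binom{n}{i}(Q-1)^i$. *)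

theory Defs
  imports "HOL-Analysis.Cartesian_Space"
begin

text \<open>A t x n matrix over F_q is represented as a function from row indices (nat, only
rows i < t matter) to vectors in F_q^n = 'a^'n.\<close>

definition wt_t :: "nat \<Rightarrow> (nat \<Rightarrow> 'a::field ^ 'n) \<Rightarrow> nat" where
  "wt_t t v = card (\<Union>i\<in>{..<t}. {j. v i $ j \<noteq> 0})"

definition d_t :: "nat \<Rightarrow> (nat \<Rightarrow> 'a::field ^ 'n) \<Rightarrow> (nat \<Rightarrow> 'a ^ 'n) \<Rightarrow> nat" where
  "d_t t u v = wt_t t (\<lambda>i. u i - v i)"

definition code_pow :: "nat \<Rightarrow> ('a::field ^ 'n) set \<Rightarrow> (nat \<Rightarrow> 'a ^ 'n) set" where
  "code_pow t C = {c. \<forall>i<t. c i \<in> C}"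

definition gen_cov_radius :: "nat \<Rightarrow> ('a::field ^ 'n) set \<Rightarrow> nat" where
  "gen_cov_radius t C = (LEAST \<rho>. \<forall>v. \<exists>c\<in>code_pow t C. d_t t v c \<le> \<rho>)"

definition ball_vol :: "nat \<Rightarrow> nat \<Rightarrow> nat \<Rightarrow> nat" where
  "ball_vol Q n r = (\<Sum>i=0..r. (n choose i) * (Q - 1) ^ i)"

end

theory Submission
  imports Defs
begin

text \<open>Reading a t x n matrix column by column turns it into a word of length n over the alphabet
  F_q^t of size Q = q^t, and turns d_t into the Hamming distance of these words. The t-fold power
  C^t yields at most q^(kt) = Q^k words, and by definition of R_t(C) the Hamming balls of radius
  R_t(C) around them cover all Q^n words. Each ball has at most V_{Q,n,R_t(C)} elements, so
  Q^n \<le> Q^k V_{Q,n,R_t(C)}, and taking logarithms to base Q gives the claim.\<close>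

definition hamming_dist :: "('n::finite \<Rightarrow> 'b) \<Rightarrow> ('n \<Rightarrow> 'b) \<Rightarrow> nat" where
  "hamming_dist f g = card {j. f j \<noteq> g j}"

lemma card_hamming_sphere_le:
  fixes w :: "'n::finite \<Rightarrow> 'b"
  assumes "finite A" and "\<forall>j. w j \<in> A"
  shows "card {f. (\<forall>j. f j \<in> A) \<and> hamming_dist f w = i} \<le> (CARD('n) choose i) * (card A - 1) ^ i"
proof -
  define G where "G = Sigma {S::'n set. card S = i} (\<lambda>S. PiE S (\<lambda>j. A - {w j}))"
  define patch where "patch = (\<lambda>(S::'n set, g). \<lambda>j. if j \<in> S then g j else w j)"
  have finite_G: "finite G"
    unfolding G_def using assms(1) by (intro finite_SigmaI finite_PiE) auto
  have "{f. (\<forall>j. f j \<in> A) \<and> hamming_dist f w = i} \<subseteq> patch ` G"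
  proof
    fix f assume f: "f \<in> {f. (\<forall>j. f j \<in> A) \<and> hamming_dist f w = i}"
    let ?S = "{j. f j \<noteq> w j}"
    have "(?S, restrict f ?S) \<in> G"
      using f unfolding G_def hamming_dist_def by auto
    moreover have "f = patch (?S, restrict f ?S)"
      unfolding patch_def by auto
    ultimately show "f \<in> patch ` G" by blast
  qed
  then have "card {f. (\<forall>j. f j \<in> A) \<and> hamming_dist f w = i} \<le> card (patch ` G)"
    by (intro card_mono finite_imageI finite_G)
  also have "\<dots> \<le> card G"
    by (rule card_image_le[OF finite_G])
  also have "\<dots> = (\<Sum>S\<in>{S::'n set. card S = i}. card (PiE S (\<lambda>j. A - {w j})))"
    unfolding G_def by (rule card_SigmaI) (auto intro!: finite_PiE simp: assms(1))
  also have "\<dots> = (\<Sum>S\<in>{S::'n set. card S = i}. (card A - 1) ^ i)"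
    by (intro sum.cong) (auto simp: card_PiE card_Diff_singleton assms)
  also have "\<dots> = (CARD('n) choose i) * (card A - 1) ^ i"
    using n_subsets[of "UNIV::'n set" i] by simp
  finally show ?thesis .
qed

lemma card_hamming_ball_le:
  fixes w :: "'n::finite \<Rightarrow> 'b"
  assumes "finite A" and "\<forall>j. w j \<in> A"
  shows "card {f. (\<forall>j. f j \<in> A) \<and> hamming_dist f w \<le> r} \<le> ball_vol (card A) CARD('n) r"
proof -
  have "{f. (\<forall>j. f j \<in> A) \<and> hamming_dist f w \<le> r}
      = (\<Union>i\<in>{0..r}. {f. (\<forall>j. f j \<in> A) \<and> hamming_dist f w = i})"
    by auto
  also have "card \<dots> \<le> (\<Sum>i=0..r. card {f. (\<forall>j. f j \<in> A) \<and> hamming_dist f w = i})"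
    by (rule card_UN_le) simp
  also have "\<dots> \<le> ball_vol (card A) CARD('n) r"
    unfolding ball_vol_def by (intro sum_mono card_hamming_sphere_le assms)
  finally show ?thesis .
qed

lemma card_le_card_mult_of_covering:
  assumes "finite K" and "W \<subseteq> (\<Union>c\<in>K. B c)" and "\<And>c. c \<in> K \<Longrightarrow> card (W \<inter> B c) \<le> V"
  shows "card W \<le> card K * V"
proof -
  have "card W = card (\<Union>c\<in>K. W \<inter> B c)"
    using assms(2) by (metis Int_UN_distrib inf.absorb1)
  also have "\<dots> \<le> (\<Sum>c\<in>K. card (W \<inter> B c))"
    by (rule card_UN_le[OF assms(1)])
  also have "\<dots> \<le> card K * V"
    using sum_mono[of K "\<lambda>c. card (W \<inter> B c)" "\<lambda>_. V"] assms(3) by simp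
  finally show ?thesis .
qed

lemma words_eq_PiE: "{f :: 'n \<Rightarrow> 'b. \<forall>j. f j \<in> A} = PiE UNIV (\<lambda>_. A)"
  by (auto simp: PiE_def extensional_def)

text \<open>Rows i \<ge> t are ignored, and each column is made undefined outside {..<t}, so that the
  alphabet F_q^t is the finite set PiE {..<t} UNIV.\<close>

definition column_word :: "nat \<Rightarrow> (nat \<Rightarrow> 'a ^ 'n) \<Rightarrow> 'n \<Rightarrow> nat \<Rightarrow> 'a" where
  "column_word t v j = restrict (\<lambda>i. v i $ j) {..<t}"

lemma column_word_restrict: "column_word t (restrict v {..<t}) = column_word t v"
  unfolding column_word_def by (intro ext) auto

lemma column_word_in_PiE: "column_word t v j \<in> PiE {..<t} (\<lambda>_. UNIV)"
  unfolding column_word_def by auto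

lemma column_word_of_columns:
  assumes "\<forall>j. f j \<in> PiE {..<t} (\<lambda>_. UNIV)"
  shows "column_word t (\<lambda>i. \<chi> j. f j i) = f"
proof (intro ext)
  fix j i
  show "column_word t (\<lambda>i. \<chi> j. f j i) j i = f j i"
  proof (cases "i < t")
    case False
    then show ?thesis
      using PiE_arb[OF assms[rule_format, of j]] by (simp add: column_word_def)
  qed (simp add: column_word_def)
qed

lemma d_t_eq_hamming_dist_column_word:
  "d_t t u v = hamming_dist (column_word t u) (column_word t v)"
proof -
  have "(\<Union>i\<in>{..<t}. {j. (u i - v i) $ j \<noteq> 0}) = {j. column_word t u j \<noteq> column_word t v j}"
    unfolding column_word_def by (auto simp: restrict_def fun_eq_iff)
  then show ?thesis
    unfolding d_t_def wt_t_def hamming_dist_def by simp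
qed

lemma d_t_le_CARD: "d_t t u (v :: nat \<Rightarrow> 'a::field ^ 'n::finite) \<le> CARD('n)"
  unfolding d_t_def wt_t_def by (rule card_mono) auto

lemma gen_cov_radius_covers:
  fixes C :: "('a::field ^ 'n::finite) set"
  assumes "C \<noteq> {}"
  shows "\<exists>c\<in>code_pow t C. d_t t v c \<le> gen_cov_radius t C"
proof -
  obtain c0 where "c0 \<in> C" using assms by blast
  then have "\<forall>v. \<exists>c\<in>code_pow t C. d_t t v c \<le> CARD('n)"
    by (intro allI bexI[of _ "\<lambda>_. c0"] d_t_le_CARD) (simp add: code_pow_def)
  then show ?thesis
    unfolding gen_cov_radius_def by (rule LeastI_ex[OF exI, THEN spec])
qed

lemma gen_cov_radius_covers_words:
  fixes C :: "('a::field ^ 'n::finite) set"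
  assumes "C \<noteq> {}" and "\<forall>j. f j \<in> PiE {..<t} (\<lambda>_. UNIV)"
  shows "\<exists>c\<in>PiE {..<t} (\<lambda>_. C). hamming_dist f (column_word t c) \<le> gen_cov_radius t C"
proof -
  obtain c where c: "c \<in> code_pow t C" "d_t t (\<lambda>i. \<chi> j. f j i) c \<le> gen_cov_radius t C"
    using gen_cov_radius_covers[OF assms(1), of t "\<lambda>i. \<chi> j. f j i"] by blast
  have "restrict c {..<t} \<in> PiE {..<t} (\<lambda>_. C)"
    using c(1) by (simp add: code_pow_def)
  moreover have "hamming_dist f (column_word t (restrict c {..<t})) \<le> gen_cov_radius t C"
    using c(2) column_word_of_columns[OF assms(2)]
    by (simp add: d_t_eq_hamming_dist_column_word column_word_restrict)
  ultimately show ?thesis by blast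
qed

lemma sphere_covering_bound:
  fixes C :: "('a::{field,finite} ^ 'n) set"
  assumes "C \<noteq> {}"
  shows "(CARD('a) ^ t) ^ CARD('n) \<le> card C ^ t * ball_vol (CARD('a) ^ t) CARD('n) (gen_cov_radius t C)"
proof -
  define A where "A = PiE {..<t} (\<lambda>_. UNIV :: 'a set)"
  define W where "W = {f :: 'n \<Rightarrow> nat \<Rightarrow> 'a. \<forall>j. f j \<in> A}"
  define K where "K = column_word t ` PiE {..<t} (\<lambda>_. C)"
  define R where "R = gen_cov_radius t C"
  define hball where "hball w = {f. hamming_dist f w \<le> R}" for w :: "'n \<Rightarrow> nat \<Rightarrow> 'a"
  have finite_A: "finite A"
    by (simp add: A_def finite_PiE)
  have card_A: "card A = CARD('a) ^ t"
    by (simp add: A_def card_PiE)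
  have "card K \<le> card (PiE {..<t} (\<lambda>_. C))"
    unfolding K_def by (rule card_image_le) (simp add: finite_PiE)
  also have "\<dots> = card C ^ t"
    by (simp add: card_PiE)
  finally have card_K: "card K \<le> card C ^ t" .
  have "(CARD('a) ^ t) ^ CARD('n) = card W"
    unfolding W_def words_eq_PiE card_A[symmetric] using finite_A by (simp add: card_PiE)
  also have "card W \<le> card K * ball_vol (card A) CARD('n) R"
  proof (rule card_le_card_mult_of_covering[where B = hball])
    show "finite K"
      by (simp add: K_def finite_PiE)
    show "W \<subseteq> (\<Union>w\<in>K. hball w)"
    proof
      fix f assume "f \<in> W"
      then obtain c where c: "c \<in> PiE {..<t} (\<lambda>_. C)" "f \<in> hball (column_word t c)"
        using gen_cov_radius_covers_words[OF assms, of f t]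
        unfolding W_def A_def hball_def R_def by blast
      from c(1) have "column_word t c \<in> K"
        unfolding K_def by (rule imageI)
      then show "f \<in> (\<Union>w\<in>K. hball w)"
        using c(2) by blast
    qed
    fix w assume "w \<in> K"
    then obtain c where "w = column_word t c"
      unfolding K_def by blast
    then have "\<forall>j. w j \<in> A"
      unfolding A_def by (simp add: column_word_in_PiE)
    moreover have "W \<inter> hball w = {f. (\<forall>j. f j \<in> A) \<and> hamming_dist f w \<le> R}"
      unfolding W_def hball_def by blast
    ultimately show "card (W \<inter> hball w) \<le> ball_vol (card A) CARD('n) R"
      using card_hamming_ball_le[OF finite_A] by (simp only:)
  qed
  also have "\<dots> \<le> card C ^ t * ball_vol (card A) CARD('n) R"
    using card_K by (rule mult_right_mono) simp
  finally show ?thesis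
    unfolding card_A R_def .
qed

lemma card_subspace_le:
  fixes C :: "('a::{field,finite} ^ 'n) set"
  assumes "vec.subspace C"
  shows "card C \<le> CARD('a) ^ vec.dim C"
proof -
  obtain B where B: "B \<subseteq> C" "vec.independent B" "C \<subseteq> vec.span B" "card B = vec.dim C"
    by (rule vec.basis_exists)
  define comb where "comb u = (\<Sum>v\<in>B. u v *s v)" for u :: "'a ^ 'n \<Rightarrow> 'a"
  have "C = vec.span B"
    using B assms vec.span_subspace by blast
  also have "\<dots> = range comb"
    unfolding comb_def by (rule vec.span_finite) simp
  also have "\<dots> \<subseteq> comb ` PiE B (\<lambda>_. UNIV)"
  proof (rule image_subsetI)
    fix u
    have "comb u = comb (restrict u B)"
      unfolding comb_def by (rule sum.cong) auto
    then show "comb u \<in> comb ` PiE B (\<lambda>_. UNIV)"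
      by (rule image_eqI[where x = "restrict u B"]) simp
  qed
  finally have "card C \<le> card (comb ` PiE B (\<lambda>_. UNIV :: 'a set))"
    by (rule card_mono[rotated]) (simp add: finite_PiE)
  also have "\<dots> \<le> card (PiE B (\<lambda>_. UNIV :: 'a set))"
    by (rule card_image_le) (simp add: finite_PiE)
  also have "\<dots> = CARD('a) ^ vec.dim C"
    using B(4) by (simp add: card_PiE)
  finally show ?thesis .
qed

lemma two_le_card_field: "2 \<le> CARD('a::{field,finite})"
proof -
  have "card {0::'a, 1} \<le> CARD('a)"
    by (rule card_mono) auto
  then show ?thesis by simp
qed

lemma ball_vol_pos: "0 < ball_vol Q n r"
  unfolding ball_vol_def by (rule sum_pos2[of _ 0]) auto

lemma diff_le_log_of_power_le_mult:
  fixes Q V :: real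
  assumes "1 < Q" and "0 < V" and "Q ^ n \<le> Q ^ k * V"
  shows "real n - real k \<le> log Q V"
proof -
  have "real n = log Q (Q ^ n)"
    using assms(1) by (simp add: log_nat_power)
  also have "\<dots> \<le> log Q (Q ^ k * V)"
    using assms by (subst log_le_cancel_iff) auto
  also have "\<dots> = real k + log Q V"
    using assms(1,2) by (simp add: log_mult log_nat_power)
  finally show ?thesis by simp
qed

theorem lemma7:
  fixes C :: "('a::{field,finite} ^ 'n) set" and k t :: nat
  assumes "vec.subspace C" and "vec.dim C = k" and "t \<ge> 1"
  shows "log (real (CARD('a) ^ t))
           (real (ball_vol (CARD('a) ^ t) CARD('n) (gen_cov_radius t C)))
         \<ge> real CARD('n) - real k"
proof -
  define Q where "Q = CARD('a) ^ t"
  define V where "V = ball_vol Q CARD('n) (gen_cov_radius t C)"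
  have "C \<noteq> {}"
    using vec.subspace_0[OF assms(1)] by blast
  have "card C ^ t \<le> (CARD('a) ^ k) ^ t"
    using card_subspace_le[OF assms(1)] assms(2) by (simp add: power_mono)
  also have "\<dots> = Q ^ k"
    unfolding Q_def by (simp flip: power_mult add: mult.commute)
  finally have "card C ^ t * V \<le> Q ^ k * V"
    by (rule mult_right_mono) simp
  with sphere_covering_bound[OF \<open>C \<noteq> {}\<close>, of t] have "Q ^ CARD('n) \<le> Q ^ k * V"
    unfolding Q_def V_def by linarith
  then have "real Q ^ CARD('n) \<le> real Q ^ k * real V"
    by (metis of_nat_le_iff of_nat_mult of_nat_power)
  moreover have "1 < real Q"
    unfolding Q_def using two_le_card_field[where 'a = 'a] assms(3) by (simp add: one_less_power)
  ultimately show ?thesis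
    using diff_le_log_of_power_le_mult ball_vol_pos unfolding Q_def V_def by simp
qed

end
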